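(* Let $X=\{(x,y,0)\in\mathbb{R}^3: x^2+y^2\le1\}$, $Y=\{(0,0,z)\in\mathbb{R}^3: z\in[0,1]\}$, $S=X\cup Y$, and $\mu=\mathcal H^2\llcorner X+\mathcal H^1\llcorner Y$. Then the function $u_0$ equal to $0$ on $X$ and to $1$ on $Y$ (defined $\mu$-a.e.) belongs to $H^{1,2}_\mu$ and satisfies $\nabla_\mu u_0=0$ $\mu$-a.e. Consequently $\dim\ker\nabla_\mu>1$ and the global Poincaré inequality $\|u-u_S\|^2_{L^2(\mu)}\le C\|\nabla_\mu u\|^2_{L^2(\mu)}$ for all $u\in H^{1,2}_\mu$, where $u_S=\mu(S)^{-1}\int u\,d\mu$, fails for every constant $C$.
   Context: Let $\mu$ be a positive finite Radon measure on $\mathbb{R}^N$. Set $\mathcal N_\mu=\{v\in C_c^\infty(\mathbb{R}^N): v=0\text{ on }\operatorname{supp}\mu\}$ and, for $x\in\mathbb{R}^N$, $N_\mu(x)=\{w(x): w\in C_c^\infty(\mathbb{R}^N;\mathbb{R}^N),\ \exists v\in\mathcal N_\mu\text{ with } w=\nabla v\text{ on }\operatorname{supp}\mu\}$. The tangent space $T_\mu(x)$ is the orthogonal complement of $N_\mu(x)$, and $\Pi_\mu(x)$ denotes the orthogonal projection onto $T_\mu(x)$. For $u\in C_c^\infty(\mathbb{R}^N)$, $\nabla_\mu u(x)=\Pi_\mu(x)\nabla u(x)$. $H^{1,2}_\mu$ is the completion of $C_c^\infty(\mathbb{R}^N)$ with respect to the norm $(\|u\|^2_{L^2(\mu)}+\|\nabla_\mu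 u\|^2_{L^2(\mu)})^{1/2}$, and $\nabla_\mu$ extends continuously to it; $\ker\nabla_\mu=\{u\in H^{1,2}_\mu:\nabla_\mu u=0\ \mu\text{-a.e.}\}$. For this $\mu$, $T_\mu(x)$ is the plane $\{z=0\}$ for $\mathcal H^2$-a.e. $x\in X$ and the line $\mathbb{R}e_3$ for $\mathcal H^1$-a.e. $x\in Y$. *)

theory Defs
  imports "HOL-Analysis.Analysis"
begin

fun Ck :: "nat \<Rightarrow> ('a::euclidean_space \<Rightarrow> 'b::real_normed_vector) \<Rightarrow> bool" where
  "Ck 0 f = continuous_on UNIV f"
| "Ck (Suc k) f = ((\<forall>x. f differentiable (at x)) \<and>
      (\<forall>v. Ck k (\<lambda>x. frechet_derivative f (at x) v)))"

definition smooth :: "('a::euclidean_space \<Rightarrow> 'b::real_normed_vector) \<Rightarrow> bool" where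
  "smooth f \<longleftrightarrow> (\<forall>k. Ck k f)"

definition Cc_inf :: "('a::euclidean_space \<Rightarrow> 'b::real_normed_vector) set" where
  "Cc_inf = {f. smooth f \<and> bounded {x. f x \<noteq> 0}}"

definition grad :: "(real^3 \<Rightarrow> real) \<Rightarrow> real^3 \<Rightarrow> real^3" where
  "grad f x = (\<chi> i. frechet_derivative f (at x) (axis i 1))"

definition embX :: "real^2 \<Rightarrow> real^3" where
  "embX p = vector [p$1, p$2, 0]"

definition embY :: "real \<Rightarrow> real^3" where
  "embY z = vector [0, 0, z]"

definition Xset :: "(real^3) set" where
  "Xset = {v. v$3 = 0 \<and> (v$1)^2 + (v$2)^2 \<le> 1}"

definition Yset :: "(real^3) set" where
  "Yset = {v. v$1 = 0 \<and> v$2 = 0 \<and> 0 \<le> v$3 \<and> v$3 \<le> 1}"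

definition Sset :: "(real^3) set" where
  "Sset = Xset \<union> Yset"

text \<open>H^2 restricted to the flat disc X: image of 2D Lebesgue measure on the unit disc
  under the isometric embedding (x,y) -> (x,y,0).\<close>
definition muX :: "(real^3) measure" where
  "muX = distr (density lborel (indicator {p::real^2. (p$1)^2 + (p$2)^2 \<le> 1})) borel embX"

text \<open>H^1 restricted to the segment Y: image of 1D Lebesgue measure on [0,1]
  under the isometric embedding z -> (0,0,z).\<close>
definition muY :: "(real^3) measure" where
  "muY = distr (density lborel (indicator {0..1::real})) borel embY"

definition mu :: "(real^3) measure" where
  "mu = measure_of UNIV (sets borel) (\<lambda>A. emeasure muX A + emeasure muY A)"

definition msupp :: "'a::metric_space measure \<Rightarrow> 'a set" where
  "msupp M = {x. \<forall>e>0. emeasure M (ball x e) > 0}"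

definition Nmu :: "(real^3 \<Rightarrow> real) set" where
  "Nmu = {v \<in> Cc_inf. \<forall>x \<in> msupp mu. v x = 0}"

definition Nmu_at :: "real^3 \<Rightarrow> (real^3) set" where
  "Nmu_at x = {w x | w. w \<in> Cc_inf \<and> (\<exists>v \<in> Nmu. \<forall>y \<in> msupp mu. w y = grad v y)}"

definition Tmu :: "real^3 \<Rightarrow> (real^3) set" where
  "Tmu x = orthogonal_comp (Nmu_at x)"

definition Pimu :: "real^3 \<Rightarrow> real^3 \<Rightarrow> real^3" where
  "Pimu x z = (THE p. p \<in> Tmu x \<and> z - p \<in> orthogonal_comp (Tmu x))"

definition grad_mu :: "(real^3 \<Rightarrow> real) \<Rightarrow> real^3 \<Rightarrow> real^3" where
  "grad_mu u x = Pimu x (grad u x)"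

text \<open>H^{1,2}_mu, the completion of C_c^infty under the graph norm, realised (isometrically)
  as the closure in L^2(mu) x L^2(mu;R^3) of the graph of grad_mu on C_c^infty:
  an element is a pair (u, g) with g = grad_mu u.\<close>
definition H12 :: "((real^3 \<Rightarrow> real) \<times> (real^3 \<Rightarrow> real^3)) set" where
  "H12 = {(u, g). u \<in> borel_measurable mu \<and> g \<in> borel_measurable mu \<and>
     (\<integral>\<^sup>+ x. ennreal ((u x)^2) \<partial>mu) < \<infinity> \<and>
     (\<integral>\<^sup>+ x. ennreal ((norm (g x))^2) \<partial>mu) < \<infinity> \<and>
     (\<exists>\<phi>. (\<forall>n. \<phi> n \<in> Cc_inf) \<and>
        (\<lambda>n. \<integral>\<^sup>+ x. ennreal ((\<phi> n x - u x)^2) \<partial>mu) \<longlonglongrightarrow> 0 \<and>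
        (\<lambda>n. \<integral>\<^sup>+ x. ennreal ((norm (grad_mu (\<phi> n) x - g x))^2) \<partial>mu) \<longlonglongrightarrow> 0)}"

definition ker_grad_mu :: "((real^3 \<Rightarrow> real) \<times> (real^3 \<Rightarrow> real^3)) set" where
  "ker_grad_mu = {(u, g) \<in> H12. AE x in mu. g x = 0}"

text \<open>u_0 = 0 on X, 1 on Y (mu-a.e.; X and Y meet only at the origin, a mu-null set).\<close>
definition u0 :: "real^3 \<Rightarrow> real" where
  "u0 x = (if x \<in> Yset then 1 else 0)"

end

theory Submission
  imports Defs "HOL-Computational_Algebra.Polynomial"
begin

text \<open>With $N = n + 1$, the smooth functions
  $\varphi_n(x) = \chi(x)\,(-\log(e^{-N} + x_1^2 + x_2^2)/N)$, where $\chi$ is a cutoff equal to 1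
  near $S$, are 1 on the segment $Y$ and tend to 0 on $X \setminus Y$, so $\varphi_n \to u_0$ in $L^2(\mu)$.
  Because a point has zero capacity in the plane, $\int_X |\nabla \varphi_n|^2 = O(1/N)$, and the
  projection $\Pi_\mu$ only decreases lengths, so $\nabla_\mu \varphi_n \to 0$ in $L^2(\mu)$.
  Hence $(u_0, 0) \in H^{1,2}_\mu$ lies in the kernel, as does $(\chi, 0)$; the two are independent since
  $u_0$ takes different values on the two parts of $S$ while $\chi = 1$ on both, and for the same reason
  $u_0$ has positive deviation from its mean while its gradient vanishes, so no Poincar\'e constant exists.\<close>

section \<open>Calculus of $C^k$ functions\<close>

lemma Ck_SucI:
  assumes "\<And>x. (f has_derivative D x) (at x)" "\<And>v. Ck k (\<lambda>x. D x v)"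
  shows "Ck (Suc k) f"
proof -
  have "frechet_derivative f (at x) = D x" for x
    using frechet_derivative_at[OF assms(1)] by simp
  then show ?thesis
    using assms by (auto simp: differentiable_def)
qed

lemma Ck_Suc_has_derivative:
  "Ck (Suc k) f \<Longrightarrow> (f has_derivative frechet_derivative f (at x)) (at x)"
  using frechet_derivative_works by auto

lemma Ck_Suc_imp_Ck: "Ck (Suc k) f \<Longrightarrow> Ck k f"
proof (induction k arbitrary: f)
  case 0
  then show ?case
    by (simp add: continuous_at_imp_continuous_on differentiable_imp_continuous_within)
qed simp

lemma Ck_imp_borel_measurable: "Ck k f \<Longrightarrow> f \<in> borel_measurable borel"
proof (induction k)
  case 0
  then show ?case by (simp add: borel_measurable_continuous_onI)
qed (use Ck_Suc_imp_Ck in blast)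

lemma Ck_const: "Ck k (\<lambda>x. c)"
proof (induction k arbitrary: c)
  case (Suc k)
  show ?case
    by (rule Ck_SucI[where D="\<lambda>x v. 0"]) (auto intro: Suc)
qed simp

lemma Ck_bounded_linear: "bounded_linear L \<Longrightarrow> Ck k L"
proof (induction k)
  case 0
  then show ?case by (simp add: linear_continuous_on)
next
  case (Suc k)
  show ?case
    by (rule Ck_SucI[where D="\<lambda>x. L"])
      (auto intro: Ck_const bounded_linear_imp_has_derivative Suc)
qed

lemma Ck_add: "Ck k f \<Longrightarrow> Ck k g \<Longrightarrow> Ck k (\<lambda>x. f x + g x)"
proof (induction k arbitrary: f g)
  case 0
  then show ?case by (simp add: continuous_on_add)
next
  case (Suc k)
  show ?case
    by (rule Ck_SucI[OF has_derivative_add[OF Ck_Suc_has_derivative Ck_Suc_has_derivative]])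
      (use Suc in auto)
qed

lemma Ck_sum: "finite I \<Longrightarrow> (\<And>i. i \<in> I \<Longrightarrow> Ck k (f i)) \<Longrightarrow> Ck k (\<lambda>x. \<Sum>i\<in>I. f i x)"
  by (induction I rule: finite_induct) (auto intro: Ck_const Ck_add)

lemma Ck_mult:
  fixes f g :: "'a::euclidean_space \<Rightarrow> real"
  shows "Ck k f \<Longrightarrow> Ck k g \<Longrightarrow> Ck k (\<lambda>x. f x * g x)"
proof (induction k arbitrary: f g)
  case 0
  then show ?case by (simp add: continuous_on_mult)
next
  case (Suc k)
  have "Ck k f" "Ck k g"
    using Suc.prems Ck_Suc_imp_Ck by blast+
  then show ?case
    by (intro Ck_SucI[OF has_derivative_mult[OF Ck_Suc_has_derivative Ck_Suc_has_derivative]]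
        Ck_add Suc.IH)
      (use Suc.prems in auto)
qed

lemma Ck_power:
  fixes f g :: "'a::euclidean_space \<Rightarrow> real"
  shows "Ck k f \<Longrightarrow> Ck k (\<lambda>x. f x ^ n)"
  by (induction n) (auto intro: Ck_const Ck_mult)

lemma Ck_minus:
  fixes f g :: "'a::euclidean_space \<Rightarrow> real"
  shows "Ck k f \<Longrightarrow> Ck k (\<lambda>x. - f x)"
  using Ck_mult[OF Ck_const[of k "-1"]] by simp

lemma Ck_diff:
  fixes f g :: "'a::euclidean_space \<Rightarrow> real"
  shows "Ck k f \<Longrightarrow> Ck k g \<Longrightarrow> Ck k (\<lambda>x. f x - g x)"
  using Ck_add[OF _ Ck_minus, of k f g] by simp

lemma Ck_inverse:
  fixes f g :: "'a::euclidean_space \<Rightarrow> real"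
  shows "Ck k f \<Longrightarrow> (\<And>x. f x \<noteq> 0) \<Longrightarrow> Ck k (\<lambda>x. inverse (f x))"
proof (induction k arbitrary: f)
  case 0
  then show ?case by (simp add: continuous_on_inverse)
next
  case (Suc k)
  have "Ck k f" "Ck k (\<lambda>x. inverse (f x))"
    using Suc Ck_Suc_imp_Ck by blast+
  then show ?case
    by (intro Ck_SucI[OF Deriv.has_derivative_inverse[OF Suc.prems(2) Ck_Suc_has_derivative[OF Suc.prems(1)]]]
        Ck_minus Ck_mult)
      (use Suc.prems in auto)
qed

lemma Ck_divide:
  fixes f g :: "'a::euclidean_space \<Rightarrow> real"
  shows "Ck k f \<Longrightarrow> Ck k g \<Longrightarrow> (\<And>x. g x \<noteq> 0) \<Longrightarrow> Ck k (\<lambda>x. f x / g x)"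
  using Ck_mult[OF _ Ck_inverse, of k f g] by (simp add: divide_inverse)

lemma Ck_ln:
  fixes f :: "'a::euclidean_space \<Rightarrow> real"
  assumes "Ck k f" "\<And>x. f x > 0"
  shows "Ck k (\<lambda>x. ln (f x))"
proof (cases k)
  case 0
  then show ?thesis
    using assms by (auto intro!: continuous_on_ln) (metis less_irrefl)
next
  case (Suc m)
  have d: "((\<lambda>x. ln (f x)) has_derivative (\<lambda>v. frechet_derivative f (at x) v * inverse (f x))) (at x)" for x
    using has_derivative_compose[OF Ck_Suc_has_derivative[OF assms(1)[unfolded Suc]]
        has_field_derivative_imp_has_derivative[OF DERIV_ln[OF assms(2)]]]
    by (simp add: mult.commute)
  have "Ck m (\<lambda>x. inverse (f x))"
    using assms Suc Ck_Suc_imp_Ck Ck_inverse by (metis less_irrefl)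
  then show ?thesis
    unfolding Suc by (intro Ck_SucI[OF d] Ck_mult) (use assms Suc in auto)
qed

lemma Ck_compose:
  fixes h :: "real \<Rightarrow> real" and f :: "'a::euclidean_space \<Rightarrow> real"
  shows "Ck k h \<Longrightarrow> Ck k f \<Longrightarrow> Ck k (\<lambda>x. h (f x))"
proof (induction k arbitrary: h f)
  case 0
  then show ?case
    by simp (metis continuous_on_compose2 continuous_on_subset subset_UNIV)
next
  case (Suc k)
  define h' where "h' = (\<lambda>y. frechet_derivative h (at y) 1)"
  have "frechet_derivative h (at y) t = t * h' y" for y t
  proof -
    have "linear (frechet_derivative h (at y))"
      using has_derivative_linear[OF Ck_Suc_has_derivative[OF Suc.prems(1)]] .
    then have "frechet_derivative h (at y) (t *\<^sub>R 1) = t *\<^sub>R frechet_derivative h (at y) 1"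
      by (rule linear_scale)
    then show ?thesis
      by (simp add: h'_def)
  qed
  then have d: "((\<lambda>x. h (f x)) has_derivative (\<lambda>v. frechet_derivative f (at x) v * h' (f x))) (at x)" for x
    using has_derivative_compose[OF Ck_Suc_has_derivative[OF Suc.prems(2)]
        Ck_Suc_has_derivative[OF Suc.prems(1)]] by simp
  moreover have "Ck k h'"
    using Suc.prems(1) by (simp add: h'_def)
  then have "Ck k (\<lambda>x. h' (f x))"
    using Suc Ck_Suc_imp_Ck by blast
  ultimately show ?case
    by (intro Ck_SucI[OF d] Ck_mult) (use Suc in auto)
qed

lemma Ck_real_SucI:
  fixes h :: "real \<Rightarrow> real"
  assumes "\<And>x. (h has_real_derivative h' x) (at x)" "Ck k h'"
  shows "Ck (Suc k) h"
  by (rule Ck_SucI[OF has_field_derivative_imp_has_derivative[OF assms(1)]])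
    (use Ck_mult[OF assms(2) Ck_const] in auto)

lemma Ck_norm_power2: "Ck k (\<lambda>x::'a::euclidean_space. (norm x)\<^sup>2)"
proof -
  have "(norm x)\<^sup>2 = (\<Sum>b\<in>Basis. (x \<bullet> b) * (x \<bullet> b))" for x :: 'a
    by (simp add: power2_norm_eq_inner euclidean_inner[of x x])
  moreover have "Ck k (\<lambda>x::'a. x \<bullet> b)" for b
    by (rule Ck_bounded_linear[OF bounded_linear_inner_left])
  ultimately show ?thesis
    by (simp add: Ck_sum Ck_mult)
qed

lemma smooth_in_Cc_inf: "(\<And>k. Ck k f) \<Longrightarrow> bounded {x. f x \<noteq> 0} \<Longrightarrow> f \<in> Cc_inf"
  by (simp add: Cc_inf_def smooth_def)

section \<open>A smooth cutoff function\<close>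

definition flat_exp :: "real poly \<Rightarrow> real \<Rightarrow> real" where
  "flat_exp P t = (if 0 < t then poly P (inverse t) * exp (- inverse t) else 0)"

text \<open>$\frac{d}{dt}\big(P(1/t)\,e^{-1/t}\big) = t^{-2}\,(P - P')(1/t)\,e^{-1/t}$ for $t > 0$.\<close>
definition flat_exp_deriv_poly :: "real poly \<Rightarrow> real poly" where
  "flat_exp_deriv_poly P = [:0, 0, 1:] * (P - pderiv P)"

lemma poly_times_exp_neg_tendsto_0: "((\<lambda>y. poly P y * exp (- y)) \<longlongrightarrow> (0::real)) at_top"
proof -
  have "((\<lambda>y. \<Sum>i\<le>degree P. coeff P i * (y ^ i / exp y)) \<longlongrightarrow> (\<Sum>i\<le>degree P. coeff P i * 0)) at_top"
    by (intro tendsto_sum tendsto_mult tendsto_const tendsto_power_div_exp_0)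
  moreover have "poly P y * exp (- y) = (\<Sum>i\<le>degree P. coeff P i * (y ^ i / exp y))" for y
    by (simp add: poly_altdef sum_distrib_right exp_minus divide_inverse mult.assoc)
  ultimately show ?thesis by simp
qed

lemma flat_exp_tendsto_0: "(flat_exp P \<longlongrightarrow> 0) (at 0)"
proof (rule filterlim_split_at_real)
  have "eventually (\<lambda>t. 0 = flat_exp P t) (at_left (0::real))"
    by (auto simp: eventually_at_filter flat_exp_def)
  then show "(flat_exp P \<longlongrightarrow> 0) (at_left 0)"
    by (rule tendsto_eventually[OF eventually_mono]) auto
  have "eventually (\<lambda>t. poly P (inverse t) * exp (- inverse t) = flat_exp P t) (at_right (0::real))"
    by (auto simp: eventually_at_filter flat_exp_def)
  moreover have "((\<lambda>t. poly P (inverse t) * exp (- inverse t)) \<longlongrightarrow> 0) (at_right 0)"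
    using filterlim_compose[OF poly_times_exp_neg_tendsto_0 filterlim_inverse_at_top_right] by simp
  ultimately show "(flat_exp P \<longlongrightarrow> 0) (at_right 0)"
    by (rule tendsto_cong[THEN iffD1])
qed

lemma flat_exp_has_real_derivative:
  "(flat_exp P has_real_derivative flat_exp (flat_exp_deriv_poly P) t) (at t)"
proof (cases "t > 0")
  case True
  have i: "(inverse has_real_derivative - (inverse t ^ Suc (Suc 0))) (at t)"
    using True by (intro DERIV_inverse) auto
  have "((\<lambda>t. poly P (inverse t) * exp (- inverse t)) has_real_derivative
      flat_exp (flat_exp_deriv_poly P) t) (at t)"
    by (rule DERIV_cong[OF DERIV_mult[OF DERIV_chain2[OF poly_DERIV i]
            DERIV_chain2[OF DERIV_exp DERIV_minus[OF i]]]])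
      (use True in \<open>simp add: flat_exp_def flat_exp_deriv_poly_def algebra_simps power2_eq_square\<close>)
  then show ?thesis
    by (rule has_field_derivative_transform_within_open[where S="{0<..}"])
      (use True in \<open>auto simp: flat_exp_def\<close>)
next
  case False
  show ?thesis
  proof (cases "t < 0")
    case True
    have "flat_exp (flat_exp_deriv_poly P) t = 0"
      using True by (simp add: flat_exp_def)
    then show ?thesis
      unfolding \<open>flat_exp (flat_exp_deriv_poly P) t = 0\<close>
      by (intro has_field_derivative_transform_within_open[OF DERIV_const[of 0], where S="{..<0}"])
        (use True in \<open>auto simp: flat_exp_def\<close>)
  next
    case False
    with \<open>\<not> t > 0\<close> have t: "t = 0" by simp
    \<comment> \<open>the difference quotient at 0 is again a flat function, namely for the polynomial $X \cdot P$\<close>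
    have "\<forall>\<^sub>F y in at 0. flat_exp ([:0, 1:] * P) y = (flat_exp P y - flat_exp P 0) / (y - 0)"
      by (auto simp: eventually_at_filter flat_exp_def divide_inverse)
    from tendsto_cong[OF this] flat_exp_tendsto_0[of "[:0, 1:] * P"]
    have "((\<lambda>y. (flat_exp P y - flat_exp P 0) / (y - 0)) \<longlongrightarrow> 0) (at 0)"
      by simp
    then show ?thesis
      unfolding t has_field_derivative_iff by (simp add: flat_exp_def)
  qed
qed

lemma Ck_flat_exp: "Ck k (flat_exp P)"
proof (induction k arbitrary: P)
  case 0
  then show ?case
    by (simp add: continuous_at_imp_continuous_on DERIV_isCont[OF flat_exp_has_real_derivative])
qed (rule Ck_real_SucI[OF flat_exp_has_real_derivative])

definition exp_neg_inverse :: "real \<Rightarrow> real" where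
  "exp_neg_inverse = flat_exp 1"

lemma Ck_exp_neg_inverse: "Ck k exp_neg_inverse"
  unfolding exp_neg_inverse_def by (rule Ck_flat_exp)

lemma exp_neg_inverse_pos: "t > 0 \<Longrightarrow> exp_neg_inverse t > 0"
  and exp_neg_inverse_nonpos: "t \<le> 0 \<Longrightarrow> exp_neg_inverse t = 0"
  and exp_neg_inverse_nonneg: "exp_neg_inverse t \<ge> 0"
  by (simp_all add: exp_neg_inverse_def flat_exp_def)

definition cutoff :: "real^3 \<Rightarrow> real" where
  "cutoff p = exp_neg_inverse (9 - (norm p)\<^sup>2) /
     (exp_neg_inverse (9 - (norm p)\<^sup>2) + exp_neg_inverse ((norm p)\<^sup>2 - 4))"

lemma cutoff_denominator_pos: "exp_neg_inverse (9 - t) + exp_neg_inverse (t - 4) > 0"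
  using exp_neg_inverse_pos[of "9 - t"] exp_neg_inverse_pos[of "t - 4"]
    exp_neg_inverse_nonneg[of "9 - t"] exp_neg_inverse_nonneg[of "t - 4"]
  by (cases "t < 9") auto

lemma Ck_cutoff: "Ck k cutoff"
  unfolding cutoff_def[abs_def]
  by (intro Ck_divide Ck_add Ck_compose[OF Ck_exp_neg_inverse] Ck_diff Ck_const Ck_norm_power2)
    (metis cutoff_denominator_pos less_irrefl)

lemma cutoff_eq_1:
  assumes "norm p < 2"
  shows "cutoff p = 1"
proof -
  have "(norm p)\<^sup>2 < 2\<^sup>2"
    using assms by (intro power_strict_mono) auto
  then show ?thesis
    using exp_neg_inverse_nonpos[of "(norm p)\<^sup>2 - 4"] exp_neg_inverse_pos[of "9 - (norm p)\<^sup>2"]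
    by (simp add: cutoff_def)
qed

lemma cutoff_nonzero_imp_norm_less: "cutoff p \<noteq> 0 \<Longrightarrow> norm p < 3"
proof -
  assume "cutoff p \<noteq> 0"
  then have "(norm p)\<^sup>2 < 3\<^sup>2"
    using exp_neg_inverse_nonpos[of "9 - (norm p)\<^sup>2"] by (force simp: cutoff_def)
  then show "norm p < 3"
    using power2_less_imp_less by fastforce
qed

lemma cutoff_bounds: "0 \<le> cutoff p" "cutoff p \<le> 1"
  using cutoff_denominator_pos[of "(norm p)\<^sup>2"] exp_neg_inverse_nonneg[of "9 - (norm p)\<^sup>2"]
    exp_neg_inverse_nonneg[of "(norm p)\<^sup>2 - 4"]
  by (auto simp: cutoff_def divide_le_eq_1)

lemma bounded_support_cutoff: "bounded {x. cutoff x \<noteq> 0}"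
  by (rule bounded_subset[OF bounded_ball[of 0 3]]) (auto dest: cutoff_nonzero_imp_norm_less)

lemma cutoff_in_Cc_inf: "cutoff \<in> Cc_inf"
  by (rule smooth_in_Cc_inf[OF Ck_cutoff bounded_support_cutoff])

section \<open>Logarithmic approximations of the indicator of the segment\<close>

definition zaxis_dist_sq :: "real^3 \<Rightarrow> real" where
  "zaxis_dist_sq p = (p$1)\<^sup>2 + (p$2)\<^sup>2"

definition log_profile :: "nat \<Rightarrow> real \<Rightarrow> real" where
  "log_profile n s = - ln (exp (- real (Suc n)) + s) / real (Suc n)"

definition approx_u0 :: "nat \<Rightarrow> real^3 \<Rightarrow> real" where
  "approx_u0 n p = cutoff p * log_profile n (zaxis_dist_sq p)"

lemma log_profile_0 [simp]: "log_profile n 0 = 1"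
  by (simp add: log_profile_def)

lemma abs_log_profile_le_1:
  assumes "0 \<le> s" "s \<le> 1"
  shows "\<bar>log_profile n s\<bar> \<le> 1"
proof -
  define N where "N = real (Suc n)"
  have N: "N \<ge> 1"
    by (simp add: N_def)
  have pos: "exp (- N) + s > 0"
    using assms by (simp add: add_pos_nonneg)
  have "exp (- N) \<le> 1"
    using N by simp
  then have "exp (- N) + s \<le> 2"
    using assms by linarith
  then have "ln (exp (- N) + s) \<le> ln 2"
    using pos by simp
  also have "\<dots> < 1"
    by (rule ln_2_less_1)
  finally have upper: "ln (exp (- N) + s) \<le> N"
    using N by simp
  have "ln (exp (- N)) \<le> ln (exp (- N) + s)"
    using assms pos by (subst ln_le_cancel_iff) auto
  then have lower: "- N \<le> ln (exp (- N) + s)"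
    by simp
  show ?thesis
    unfolding log_profile_def N_def[symmetric] using N upper lower
    by (auto simp: abs_le_iff divide_le_eq le_divide_eq)
qed

lemma log_profile_tendsto_0:
  assumes "s > 0"
  shows "(\<lambda>n. log_profile n s) \<longlonglongrightarrow> 0"
proof -
  have N: "filterlim (\<lambda>n. real (Suc n)) at_top sequentially"
    using filterlim_compose[OF filterlim_real_sequentially filterlim_Suc] by (simp add: o_def)
  have "(\<lambda>n. exp (- real (Suc n))) \<longlonglongrightarrow> 0"
    using filterlim_compose[OF exp_at_bot filterlim_uminus_at_bot_at_top[THEN filterlim_compose, OF N]]
    by (simp add: filterlim_at_bot_mirror)
  then have "(\<lambda>n. - ln (exp (- real (Suc n)) + s)) \<longlonglongrightarrow> - ln (0 + s)"
    using assms by (intro tendsto_minus tendsto_ln tendsto_add tendsto_const) auto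
  then show ?thesis
    unfolding log_profile_def
    by (rule tendsto_divide_0[OF _ filterlim_at_top_imp_at_infinity[OF N]])
qed

lemma Ck_vec_nth: "Ck k (\<lambda>p::real^'n. p$i)"
  by (rule Ck_bounded_linear[OF bounded_linear_vec_nth])

lemma Ck_approx_u0: "Ck k (approx_u0 n)"
proof -
  have "Ck k (\<lambda>p. - ln (exp (- real (Suc n)) + zaxis_dist_sq p) / real (Suc n))"
    unfolding zaxis_dist_sq_def
    by (intro Ck_divide Ck_minus Ck_ln Ck_add Ck_power Ck_vec_nth Ck_const) (auto intro: add_pos_nonneg)
  then show ?thesis
    unfolding approx_u0_def[abs_def] log_profile_def by (intro Ck_mult Ck_cutoff)
qed

lemma approx_u0_in_Cc_inf: "approx_u0 n \<in> Cc_inf"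
  by (rule smooth_in_Cc_inf[OF Ck_approx_u0])
    (rule bounded_subset[OF bounded_support_cutoff], auto simp: approx_u0_def)

lemma norm_power2_vec3: "(norm x)\<^sup>2 = (x$1)\<^sup>2 + (x$2)\<^sup>2 + (x$3)\<^sup>2" for x :: "real^3"
  unfolding power2_norm_eq_inner by (simp add: inner_vec_def sum_3 power2_eq_square)

lemma grad_eqI:
  assumes "open U" "p \<in> U" "\<And>x. x \<in> U \<Longrightarrow> f x = g x" "(g has_derivative D) (at p)"
  shows "grad f p = (\<chi> i. D (axis i 1))"
proof -
  have "(f has_derivative D) (at p)"
    using has_derivative_transform_within_open[OF assms(4) assms(1,2)] assms(3) by metis
  then show ?thesis
    unfolding grad_def using frechet_derivative_at by metis
qed

lemma grad_cutoff: "norm p < 2 \<Longrightarrow> grad cutoff p = 0"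
  using grad_eqI[OF open_ball, of p 0 2 cutoff "\<lambda>_. 1" "\<lambda>_. 0"] cutoff_eq_1
  by (simp add: vec_eq_iff)

definition energy_density :: "nat \<Rightarrow> real \<Rightarrow> real" where
  "energy_density n s = 4 * s / ((real (Suc n))\<^sup>2 * (exp (- real (Suc n)) + s)\<^sup>2)"

lemma norm_grad_approx_u0:
  assumes "norm p < 2"
  shows "(norm (grad (approx_u0 n) p))\<^sup>2 = energy_density n (zaxis_dist_sq p)"
proof -
  define N where "N = real (Suc n)"
  define g where "g q = exp (- N) + ((q$1)\<^sup>2 + (q$2)\<^sup>2)" for q :: "real^3"
  have N_pos: "N > 0"
    by (simp add: N_def)
  have g_pos: "g q > 0" for q
    by (simp add: g_def add_pos_nonneg)
  have nth: "((\<lambda>q::real^3. q$i) has_derivative (\<lambda>v. v$i)) (at p)" for i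
    by (rule bounded_linear_imp_has_derivative[OF bounded_linear_vec_nth])
  have "(g has_derivative (\<lambda>v. 0 + ((p$1 * v$1 + v$1 * p$1) + (p$2 * v$2 + v$2 * p$2)))) (at p)"
    unfolding g_def[abs_def] power2_eq_square
    by (intro has_derivative_add has_derivative_mult nth has_derivative_const)
  then have "(g has_derivative (\<lambda>v. 2 * p$1 * v$1 + 2 * p$2 * v$2)) (at p)"
    by (simp add: algebra_simps)
  from has_derivative_compose[OF this has_field_derivative_imp_has_derivative[OF DERIV_ln[OF g_pos]]]
  have "((\<lambda>q. ln (g q) * (- inverse N)) has_derivative
      (\<lambda>v. inverse (g p) * (2 * p$1 * v$1 + 2 * p$2 * v$2) * (- inverse N))) (at p)"
    by (rule has_derivative_mult_left)
  moreover have "approx_u0 n q = ln (g q) * (- inverse N)" if "q \<in> ball 0 2" for q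
    using that cutoff_eq_1
    by (simp add: approx_u0_def log_profile_def g_def N_def zaxis_dist_sq_def divide_inverse)
  ultimately have "grad (approx_u0 n) p =
      (\<chi> i. inverse (g p) * (2 * p$1 * axis i 1 $ 1 + 2 * p$2 * axis i 1 $ 2) * (- inverse N))"
    using grad_eqI[OF open_ball, of p 0 2] assms by simp
  then show ?thesis
    using g_pos[of p] N_pos unfolding norm_power2_vec3 energy_density_def zaxis_dist_sq_def N_def[symmetric]
    by (simp add: axis_def g_def field_simps power2_eq_square) (simp add: add_divide_distrib)
qed

lemma norm_orthogonal_projection_le:
  fixes z :: "'a::euclidean_space"
  assumes "subspace T"
  shows "norm (THE p. p \<in> T \<and> z - p \<in> T\<^sup>\<bottom>) \<le> norm z"
proof -
  have "z \<in> T + T\<^sup>\<bottom>"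
    using subspace_sum_orthogonal_comp[OF assms] by simp
  then obtain a b where ab: "a \<in> T" "b \<in> T\<^sup>\<bottom>" "z = a + b"
    by (rule set_plus_elim) blast
  have "(THE p. p \<in> T \<and> z - p \<in> T\<^sup>\<bottom>) = a"
  proof (rule the_equality)
    fix p
    assume p: "p \<in> T \<and> z - p \<in> T\<^sup>\<bottom>"
    have "(z - p) - b \<in> T\<^sup>\<bottom>"
      using p ab(2) by (simp add: subspace_diff subspace_orthogonal_comp)
    moreover have "(z - p) - b = a - p"
      using ab(3) by simp
    ultimately have "a - p \<in> T\<^sup>\<bottom>"
      by simp
    moreover have "a - p \<in> T"
      using p ab assms by (simp add: subspace_diff)
    ultimately have "a - p = 0"
      using orthogonal_Int_0[OF assms] by blast
    then show "p = a"
      by simp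
  qed (use ab in simp)
  moreover have "orthogonal a b"
    using ab unfolding orthogonal_comp_def by auto
  then have "(norm z)\<^sup>2 = (norm a)\<^sup>2 + (norm b)\<^sup>2"
    using ab(3) norm_add_Pythagorean by simp
  then have "norm a \<le> norm z"
    by (simp add: power2_le_imp_le)
  ultimately show ?thesis
    by simp
qed

lemma norm_grad_mu_le: "norm (grad_mu f x) \<le> norm (grad f x)"
  unfolding grad_mu_def Pimu_def Tmu_def
  by (rule norm_orthogonal_projection_le[OF subspace_orthogonal_comp])

section \<open>The measure $\mu$\<close>

lemma nn_integral_emeasure_add:
  assumes sets_eq: "sets M1 = sets M" "sets M2 = sets M"
    and emeasure_eq: "\<And>A. A \<in> sets M \<Longrightarrow> emeasure M A = emeasure M1 A + emeasure M2 A"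
    and f: "f \<in> borel_measurable M"
  shows "(\<integral>\<^sup>+ x. f x \<partial>M) = (\<integral>\<^sup>+ x. f x \<partial>M1) + (\<integral>\<^sup>+ x. f x \<partial>M2)"
  using f
proof (induction rule: borel_measurable_induct)
  case (cong f g)
  have "integral\<^sup>N N f = integral\<^sup>N N g" if "sets N = sets M" for N
    using cong.hyps(3) sets_eq_imp_space_eq[OF that] by (auto intro: nn_integral_cong)
  with cong.IH sets_eq show ?case
    by simp
next
  case (set A)
  then show ?case
    using sets_eq by (simp add: emeasure_eq)
next
  case (mult u c)
  have "u \<in> borel_measurable M1" "u \<in> borel_measurable M2"
    using mult.hyps measurable_cong_sets[OF sets_eq(1) refl] measurable_cong_sets[OF sets_eq(2) refl]
    by blast+
  with mult show ?case
    by (simp add: nn_integral_cmult distrib_left)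
next
  case (add u v)
  have "u \<in> borel_measurable M1" "u \<in> borel_measurable M2"
    "v \<in> borel_measurable M1" "v \<in> borel_measurable M2"
    using add.hyps measurable_cong_sets[OF sets_eq(1) refl] measurable_cong_sets[OF sets_eq(2) refl]
    by blast+
  with add show ?case
    by (simp add: nn_integral_add ac_simps)
next
  case (seq U)
  have meas: "U i \<in> borel_measurable M1" "U i \<in> borel_measurable M2" for i
    using seq.hyps measurable_cong_sets[OF sets_eq(1) refl] measurable_cong_sets[OF sets_eq(2) refl]
    by blast+
  have SUP: "(\<integral>\<^sup>+ x. (SUP i. U i) x \<partial>N) = (SUP i. integral\<^sup>N N (U i))"
    if "\<And>i. U i \<in> borel_measurable N" for N
    using nn_integral_monotone_convergence_SUP[of U N, OF \<open>incseq U\<close> that]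
    by (simp add: SUP_apply image_comp)
  have inc: "incseq (\<lambda>i. integral\<^sup>N N (U i))" for N
    using \<open>incseq U\<close> by (auto simp: incseq_def le_fun_def intro!: nn_integral_mono)
  show ?case
    unfolding SUP[OF seq.hyps(1)] SUP[OF meas(1)] SUP[OF meas(2)] seq.IH
    by (rule ennreal_SUP_add[OF inc inc])
qed

definition unit_disc :: "(real^2) set" where
  "unit_disc = {p. (p$1)\<^sup>2 + (p$2)\<^sup>2 \<le> 1}"

lemma embX_nth [simp]: "embX q $ 1 = q$1" "embX q $ 2 = q$2" "embX q $ 3 = 0"
  by (simp_all add: embX_def)

lemma embY_nth [simp]: "embY z $ 1 = 0" "embY z $ 2 = 0" "embY z $ 3 = z"
  by (simp_all add: embY_def)

lemma linear_embX: "linear embX"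
  by (auto simp: linear_iff vec_eq_iff forall_3)

lemma linear_embY: "linear embY"
  by (auto simp: linear_iff vec_eq_iff forall_3)

lemma embX_measurable [measurable]: "embX \<in> borel_measurable borel"
  and embY_measurable [measurable]: "embY \<in> borel_measurable borel"
  using linear_embX linear_embY
  by (auto intro!: borel_measurable_continuous_onI linear_continuous_on simp: linear_conv_bounded_linear)

lemma unit_disc_measurable [measurable]: "unit_disc \<in> sets borel"
  and Xset_measurable [measurable]: "Xset \<in> sets borel"
  and Yset_measurable [measurable]: "Yset \<in> sets borel"
  and Sset_measurable [measurable]: "Sset \<in> sets borel"
  by (simp_all add: unit_disc_def Xset_def Yset_def Sset_def)

lemma sets_muX [measurable_cong]: "sets muX = sets borel"
  and sets_muY [measurable_cong]: "sets muY = sets borel"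
  by (simp_all add: muX_def muY_def)

lemma mu_measure_of_conditions:
  "positive (sets borel) (\<lambda>A. emeasure muX A + emeasure muY A)"
  "countably_additive (sets borel) (\<lambda>A. emeasure muX A + emeasure muY A)"
proof -
  show "positive (sets borel) (\<lambda>A. emeasure muX A + emeasure muY A)"
    by (simp add: positive_def)
  show "countably_additive (sets borel) (\<lambda>A. emeasure muX A + emeasure muY A)"
    unfolding countably_additive_def
  proof (intro allI impI)
    fix A :: "nat \<Rightarrow> (real^3) set"
    assume A: "range A \<subseteq> sets borel" "disjoint_family A"
    have "(\<Sum>i. emeasure muX (A i) + emeasure muY (A i)) = (\<Sum>i. emeasure muX (A i)) + (\<Sum>i. emeasure muY (A i))"
      by (rule suminf_add[symmetric]) auto
    also have "\<dots> = emeasure muX (\<Union>i. A i) + emeasure muY (\<Union>i. A i)"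
      using A by (simp add: suminf_emeasure sets_muX sets_muY)
    finally show "(\<Sum>i. emeasure muX (A i) + emeasure muY (A i)) = emeasure muX (\<Union>(range A)) + emeasure muY (\<Union>(range A))" .
  qed
qed

lemma sets_mu [simp, measurable_cong]: "sets mu = sets borel"
  unfolding mu_def using sigma_algebra.sets_measure_of_eq[OF sets.sigma_algebra_axioms[of borel]]
  by simp

lemma space_mu [simp]: "space mu = UNIV"
  by (simp add: mu_def space_measure_of_conv)

lemma emeasure_mu: "A \<in> sets borel \<Longrightarrow> emeasure mu A = emeasure muX A + emeasure muY A"
  unfolding mu_def
  using emeasure_measure_of_sigma[OF _ mu_measure_of_conditions] sets.sigma_algebra_axioms[of borel]
  by simp

lemma nn_integral_mu:
  "f \<in> borel_measurable borel \<Longrightarrow> (\<integral>\<^sup>+ x. f x \<partial>mu) = (\<integral>\<^sup>+ x. f x \<partial>muX) + (\<integral>\<^sup>+ x. f x \<partial>muY)"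
  by (rule nn_integral_emeasure_add) (simp_all add: sets_muX sets_muY emeasure_mu)

lemma nn_integral_muX:
  "f \<in> borel_measurable borel \<Longrightarrow>
    (\<integral>\<^sup>+ x. f x \<partial>muX) = (\<integral>\<^sup>+ q. indicator unit_disc q * f (embX q) \<partial>lborel)"
  unfolding muX_def unit_disc_def[symmetric]
  by (subst nn_integral_distr) (auto simp: nn_integral_density)

lemma nn_integral_muY:
  "f \<in> borel_measurable borel \<Longrightarrow>
    (\<integral>\<^sup>+ x. f x \<partial>muY) = (\<integral>\<^sup>+ z. indicator {0..1} z * f (embY z) \<partial>lborel)"
  unfolding muY_def
  by (subst nn_integral_distr) (auto simp: nn_integral_density)

lemma emeasure_muX:
  assumes "A \<in> sets borel"
  shows "emeasure muX A = emeasure lborel (unit_disc \<inter> embX -` A)"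
proof -
  have "indicator unit_disc q * indicator A (embX q) = (indicator (unit_disc \<inter> embX -` A) q :: ennreal)" for q
    by (simp split: split_indicator)
  moreover have "unit_disc \<inter> embX -` A \<in> sets lborel"
    using assms by measurable
  ultimately show ?thesis
    using assms nn_integral_muX[of "indicator A"] by simp
qed

lemma emeasure_muY:
  assumes "A \<in> sets borel"
  shows "emeasure muY A = emeasure lborel ({0..1} \<inter> embY -` A)"
proof -
  have "indicator {0..1} z * indicator A (embY z) = (indicator ({0..1} \<inter> embY -` A) z :: ennreal)" for z
    by (simp split: split_indicator)
  moreover have "{0..1} \<inter> embY -` A \<in> sets lborel"
    using assms by measurable
  ultimately show ?thesis
    using assms nn_integral_muY[of "indicator A"] by simp
qed

lemma AE_mu_Sset: "AE x in mu. x \<in> Sset"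
proof (rule AE_I')
  have "unit_disc \<inter> embX -` (- Sset) = {}" "{0..1} \<inter> embY -` (- Sset) = {}"
    by (auto simp: unit_disc_def Sset_def Xset_def Yset_def)
  then show "- Sset \<in> null_sets mu"
    by (simp add: null_sets_def emeasure_mu emeasure_muX emeasure_muY)
qed auto

lemma Sset_norm_le_1:
  assumes "x \<in> Sset"
  shows "norm x \<le> 1"
proof -
  have "(norm x)\<^sup>2 \<le> 1"
    using assms unfolding norm_power2_vec3 Sset_def Xset_def Yset_def by (auto intro: power_le_one)
  then show ?thesis
    using power2_le_imp_le[of "norm x" 1] by simp
qed

lemma bounded_unit_disc: "bounded unit_disc"
proof (rule bounded_subset[OF bounded_cball])
  show "unit_disc \<subseteq> cball 0 1"
  proof
    fix q :: "real^2"
    assume "q \<in> unit_disc"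
    then have "(norm q)\<^sup>2 \<le> 1"
      unfolding unit_disc_def power2_norm_eq_inner by (simp add: inner_vec_def sum_2 power2_eq_square)
    then show "q \<in> cball 0 1"
      using power2_le_imp_le[of "norm q" 1] by simp
  qed
qed

lemma finite_measure_mu: "finite_measure mu"
proof (rule finite_measureI)
  have "emeasure muX UNIV < \<infinity>"
    using emeasure_bounded_finite[OF bounded_unit_disc] by (simp add: emeasure_muX)
  moreover have "emeasure muY UNIV < \<infinity>"
    by (simp add: emeasure_muY)
  ultimately show "emeasure mu (space mu) \<noteq> \<infinity>"
    by (simp add: emeasure_mu less_top)
qed

section \<open>The energy estimate\<close>

definition dyadic_square :: "nat \<Rightarrow> (real^2) set" where
  "dyadic_square k = cbox (\<chi> i. - ((1/2)^k)) (\<chi> i. (1/2)^k)"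

lemma dyadic_square_measurable [measurable]: "dyadic_square k \<in> sets borel"
  by (simp add: dyadic_square_def)

lemma mem_dyadic_square: "q \<in> dyadic_square k \<longleftrightarrow> \<bar>q$1\<bar> \<le> (1/2)^k \<and> \<bar>q$2\<bar> \<le> (1/2)^k"
  unfolding dyadic_square_def mem_box_cart by (auto simp: forall_2 abs_le_iff)

lemma emeasure_lborel_square:
  fixes a b :: real
  assumes "a \<le> b"
  shows "emeasure lborel (cbox (\<chi> i::2. a) (\<chi> i. b)) = ennreal ((b - a)\<^sup>2)"
proof -
  have "card (Basis :: (real^2) set) = 2"
    using DIM_cart[where 'a=real and 'b=2] by simp
  moreover have "i \<in> Basis \<Longrightarrow> (\<chi> j::2. c) \<bullet> i = c" for i c
    by (auto simp: Basis_vec_def inner_axis)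
  ultimately show ?thesis
    using assms by (simp add: emeasure_lborel_cbox_eq inner_diff_left)
qed

lemma emeasure_dyadic_square: "emeasure lborel (dyadic_square k) = ennreal (4 / 4^k)"
proof -
  have "(2 * (1/2::real)^k)\<^sup>2 = 4 / 4^k"
    by (simp add: power2_eq_square power_mult_distrib[symmetric] power_one_over)
  then show ?thesis
    unfolding dyadic_square_def by (subst emeasure_lborel_square) auto
qed

lemma exists_dyadic_scale:
  fixes m :: real
  shows "(1/2)^K < m \<Longrightarrow> m \<le> 1 \<Longrightarrow> \<exists>k<K. (1/2)^Suc k < m \<and> m \<le> (1/2)^k"
proof (induction K)
  case (Suc K)
  then show ?case
    by (cases "(1/2)^K < m") (auto intro: less_SucI)
qed simp

lemma unit_disc_dyadic_annulus:
  assumes "q \<in> unit_disc" "q \<notin> dyadic_square K"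
  obtains k where "k < K" "q \<in> dyadic_square k" "(1/4)^Suc k < (q$1)\<^sup>2 + (q$2)\<^sup>2"
proof -
  define m where "m = max \<bar>q$1\<bar> \<bar>q$2\<bar>"
  have "m\<^sup>2 = (q$1)\<^sup>2 \<or> m\<^sup>2 = (q$2)\<^sup>2"
    by (simp add: m_def max_def)
  then have m_sq: "m\<^sup>2 \<le> (q$1)\<^sup>2 + (q$2)\<^sup>2"
    using zero_le_power2[of "q$1"] zero_le_power2[of "q$2"] by linarith
  have "(q$1)\<^sup>2 + (q$2)\<^sup>2 \<le> 1"
    using assms(1) by (simp add: unit_disc_def)
  then have "(q$1)\<^sup>2 \<le> 1" "(q$2)\<^sup>2 \<le> 1"
    using zero_le_power2[of "q$1"] zero_le_power2[of "q$2"] by linarith+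
  then have "m \<le> 1"
    by (simp add: m_def abs_square_le_1)
  moreover have "(1/2)^K < m"
    using assms(2) by (auto simp: mem_dyadic_square m_def)
  ultimately obtain k where k: "k < K" "(1/2)^Suc k < m" "m \<le> (1/2)^k"
    using exists_dyadic_scale[of K m] by auto
  have "(1/4::real)^Suc k = ((1/2)^Suc k)\<^sup>2"
    by (simp add: power_mult_distrib[symmetric] power2_eq_square power_commutes)
  also have "\<dots> < m\<^sup>2"
    using k(2) by (intro power_strict_mono) auto
  finally show ?thesis
    using that k m_sq by (simp add: mem_dyadic_square m_def)
qed

text \<open>Split the disc into the dyadic annuli $Q_k \setminus Q_{k+1}$, $k < K$, and the core $Q_K$.\<close>
lemma inverse_le_dyadic_sum:
  fixes q :: "real^2"
  assumes E: "E > 0"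
  shows "indicator unit_disc q * ennreal (1 / (E + ((q$1)\<^sup>2 + (q$2)\<^sup>2))) \<le>
    ennreal (1 / E) * indicator (dyadic_square K) q +
    (\<Sum>k<K. ennreal (4^Suc k) * indicator (dyadic_square k) q)"
proof (cases "q \<in> unit_disc")
  case disc: True
  define s where "s = (q$1)\<^sup>2 + (q$2)\<^sup>2"
  show ?thesis
  proof (cases "q \<in> dyadic_square K")
    case True
    have "ennreal (1 / (E + s)) \<le> ennreal (1 / E)"
      using E by (intro ennreal_leI divide_left_mono) (auto simp: s_def intro!: mult_pos_pos add_pos_nonneg)
    with disc True show ?thesis
      by (simp add: s_def add_increasing2)
  next
    case False
    then obtain k where k: "k < K" "q \<in> dyadic_square k" "(1/4)^Suc k < s"
      using unit_disc_dyadic_annulus disc unfolding s_def by blast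
    moreover have "0 < s"
      using k(3) zero_less_power[of "1/4::real" "Suc k"] by linarith
    ultimately have "1 / (E + s) \<le> 1 / (1/4)^Suc k"
      using E by (intro divide_left_mono) (auto intro!: mult_pos_pos)
    then have "ennreal (1 / (E + s)) \<le> ennreal (4^Suc k) * indicator (dyadic_square k) q"
      using k(2) by (simp add: power_one_over ennreal_leI)
    also have "\<dots> \<le> (\<Sum>k<K. ennreal (4^Suc k) * indicator (dyadic_square k) q)"
      using k(1) by (intro member_le_sum) auto
    also have "\<dots> \<le> ennreal (1 / E) * indicator (dyadic_square K) q +
        (\<Sum>k<K. ennreal (4^Suc k) * indicator (dyadic_square k) q)"
      by (rule add_increasing) simp_all
    finally show ?thesis
      using disc by (simp add: s_def)
  qed
qed simp

lemma nn_integral_inverse_le: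
  fixes E :: real
  assumes E: "E > 0"
  shows "(\<integral>\<^sup>+ q. indicator unit_disc q * ennreal (1 / (E + ((q$1)\<^sup>2 + (q$2)\<^sup>2))) \<partial>lborel)
    \<le> ennreal (4 / (E * 4^K) + 16 * K)"
proof -
  have "(\<integral>\<^sup>+ q. indicator unit_disc q * ennreal (1 / (E + ((q$1)\<^sup>2 + (q$2)\<^sup>2))) \<partial>lborel) \<le>
      (\<integral>\<^sup>+ q. ennreal (1 / E) * indicator (dyadic_square K) q +
        (\<Sum>k<K. ennreal (4^Suc k) * indicator (dyadic_square k) q) \<partial>lborel)"
    by (intro nn_integral_mono inverse_le_dyadic_sum E)
  also have "\<dots> = ennreal (1 / E) * emeasure lborel (dyadic_square K) +
      (\<Sum>k<K. ennreal (4^Suc k) * emeasure lborel (dyadic_square k))"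
  proof -
    have "(\<lambda>q. ennreal (4^Suc k) * indicator (dyadic_square k) q) \<in> borel_measurable lborel" for k
      by measurable
    then show ?thesis
      by (subst nn_integral_add, measurable, subst nn_integral_sum)
        (simp_all only: nn_integral_cmult_indicator[OF dyadic_square_measurable[unfolded sets_lborel[symmetric]]])
  qed
  also have "\<dots> = ennreal (4 / (E * 4^K) + 16 * K)"
    using E by (simp add: emeasure_dyadic_square ennreal_mult[symmetric] ennreal_plus)
      (simp add: ennreal_of_nat_eq_real_of_nat ennreal_mult mult.commute)
  finally show ?thesis .
qed

lemma energy_density_le:
  assumes "0 \<le> s"
  shows "energy_density n s \<le> 4 / (real (Suc n))\<^sup>2 * (1 / (exp (- real (Suc n)) + s))"
proof -
  define N E where "N = real (Suc n)" and "E = exp (- real (Suc n))"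
  have pos: "E > 0" "E + s > 0" "N > 0"
    using assms by (auto simp: E_def N_def add_pos_nonneg)
  have "energy_density n s = 4 / N\<^sup>2 * (1 / (E + s)) * (s / (E + s))"
    using pos by (simp add: energy_density_def N_def E_def power2_eq_square field_simps)
  also have "\<dots> \<le> 4 / N\<^sup>2 * (1 / (E + s)) * 1"
    using pos assms by (intro mult_left_mono) auto
  finally show ?thesis
    by (simp add: N_def E_def)
qed

lemma nn_integral_energy_density_le:
  "(\<integral>\<^sup>+ q. indicator unit_disc q * ennreal (energy_density n ((q$1)\<^sup>2 + (q$2)\<^sup>2)) \<partial>lborel)
    \<le> ennreal (80 / real (Suc n))"
proof -
  define N where "N = real (Suc n)"
  have N: "N \<ge> 1"
    by (simp add: N_def)
  have "exp N = exp 1 ^ Suc n"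
    using exp_of_nat_mult[of "Suc n" 1] by (simp add: N_def)
  also have "\<dots> \<le> 4 ^ Suc n"
    using exp_le by (intro power_mono) auto
  finally have exp_le: "exp N \<le> 4 ^ Suc n" .
  have "(\<integral>\<^sup>+ q. indicator unit_disc q * ennreal (energy_density n ((q$1)\<^sup>2 + (q$2)\<^sup>2)) \<partial>lborel) \<le>
      (\<integral>\<^sup>+ q. ennreal (4 / N\<^sup>2) * (indicator unit_disc q * ennreal (1 / (exp (- N) + ((q$1)\<^sup>2 + (q$2)\<^sup>2)))) \<partial>lborel)"
    using energy_density_le
    by (intro nn_integral_mono) (auto simp: N_def ennreal_mult[symmetric] intro!: ennreal_leI split: split_indicator)
  also have "\<dots> = ennreal (4 / N\<^sup>2) *
      (\<integral>\<^sup>+ q. indicator unit_disc q * ennreal (1 / (exp (- N) + ((q$1)\<^sup>2 + (q$2)\<^sup>2))) \<partial>lborel)"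
    by (rule nn_integral_cmult) measurable
  also have "\<dots> \<le> ennreal (4 / N\<^sup>2) * ennreal (4 / (exp (- N) * 4 ^ Suc n) + 16 * Suc n)"
    by (rule mult_left_mono[OF nn_integral_inverse_le]) simp_all
  also have "\<dots> = ennreal (4 / N\<^sup>2 * (4 / (exp (- N) * 4 ^ Suc n) + 16 * Suc n))"
    by (rule ennreal_mult[symmetric]) simp_all
  also have "\<dots> \<le> ennreal (80 / N)"
  proof (rule ennreal_leI)
    have "4 / (exp (- N) * 4 ^ Suc n) \<le> 4"
      using exp_le by (simp add: exp_minus field_simps)
    then have "4 / N\<^sup>2 * (4 / (exp (- N) * 4 ^ Suc n) + 16 * Suc n) \<le> 4 / N\<^sup>2 * (4 + 16 * N)"
      by (intro mult_left_mono) (auto simp: N_def)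
    also have "\<dots> \<le> 80 / N"
      using N by (simp add: field_simps power2_eq_square)
    finally show "4 / N\<^sup>2 * (4 / (exp (- N) * 4 ^ Suc n) + 16 * Suc n) \<le> 80 / N" .
  qed
  finally show ?thesis
    by (simp add: N_def)
qed

section \<open>Two independent elements of the kernel\<close>

lemma zaxis_dist_sq_Sset:
  assumes "x \<in> Sset"
  shows "0 \<le> zaxis_dist_sq x" "zaxis_dist_sq x \<le> 1" "x \<in> Yset \<longleftrightarrow> zaxis_dist_sq x = 0"
  using assms by (auto simp: zaxis_dist_sq_def Sset_def Xset_def Yset_def)

lemma approx_u0_Sset:
  assumes "x \<in> Sset"
  shows "approx_u0 n x = log_profile n (zaxis_dist_sq x)"
proof -
  have "cutoff x = 1"
    using Sset_norm_le_1[OF assms] by (intro cutoff_eq_1) simp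
  then show ?thesis
    by (simp add: approx_u0_def)
qed

lemma approx_u0_minus_u0_Sset:
  "x \<in> Sset \<Longrightarrow> approx_u0 n x - u0 x = (if x \<in> Yset then 0 else log_profile n (zaxis_dist_sq x))"
  using zaxis_dist_sq_Sset by (simp add: approx_u0_Sset u0_def)

lemma approx_u0_tendsto_u0:
  assumes "x \<in> Sset"
  shows "(\<lambda>n. approx_u0 n x - u0 x) \<longlonglongrightarrow> 0"
proof (cases "x \<in> Yset")
  case False
  then have "zaxis_dist_sq x > 0"
    using zaxis_dist_sq_Sset[OF assms] by simp
  with False show ?thesis
    using assms by (simp add: approx_u0_minus_u0_Sset log_profile_tendsto_0)
qed (use assms in \<open>simp add: approx_u0_minus_u0_Sset\<close>)

lemma abs_approx_u0_minus_u0_le: "x \<in> Sset \<Longrightarrow> \<bar>approx_u0 n x - u0 x\<bar> \<le> 1"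
  using zaxis_dist_sq_Sset abs_log_profile_le_1 by (simp add: approx_u0_minus_u0_Sset)

lemma u0_measurable [measurable]: "u0 \<in> borel_measurable borel"
  unfolding u0_def[abs_def] by measurable

lemma approx_u0_measurable [measurable]: "approx_u0 n \<in> borel_measurable borel"
  by (rule Ck_imp_borel_measurable[OF Ck_approx_u0[of 0]])

lemma cutoff_measurable [measurable]: "cutoff \<in> borel_measurable borel"
  by (rule Ck_imp_borel_measurable[OF Ck_cutoff[of 0]])

lemma energy_density_measurable [measurable]:
  "(\<lambda>x. energy_density n (zaxis_dist_sq x)) \<in> borel_measurable borel"
  unfolding energy_density_def zaxis_dist_sq_def by measurable

lemma approx_u0_tendsto_u0_L2: "(\<lambda>n. \<integral>\<^sup>+ x. ennreal ((approx_u0 n x - u0 x)\<^sup>2) \<partial>mu) \<longlonglongrightarrow> 0"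
proof -
  have "(\<lambda>n. \<integral>\<^sup>+ x. ennreal ((approx_u0 n x - u0 x)\<^sup>2) \<partial>mu) \<longlonglongrightarrow> (\<integral>\<^sup>+ x. 0 \<partial>mu)"
  proof (rule nn_integral_dominated_convergence[where w="\<lambda>_. 1"])
    show "AE x in mu. ennreal ((approx_u0 n x - u0 x)\<^sup>2) \<le> 1" for n
      using AE_mu_Sset
      by eventually_elim (use abs_approx_u0_minus_u0_le in \<open>simp add: abs_square_le_1\<close>)
    show "(\<integral>\<^sup>+ x. 1 \<partial>mu) < \<infinity>"
      using finite_measure.emeasure_finite[OF finite_measure_mu, of UNIV] by (simp add: less_top)
    show "AE x in mu. (\<lambda>n. ennreal ((approx_u0 n x - u0 x)\<^sup>2)) \<longlonglongrightarrow> 0"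
      using AE_mu_Sset
    proof eventually_elim
      case (elim x)
      have "(\<lambda>n. (approx_u0 n x - u0 x)\<^sup>2) \<longlonglongrightarrow> 0\<^sup>2"
        by (intro tendsto_power approx_u0_tendsto_u0 elim)
      from tendsto_ennrealI[OF this] show ?case
        by simp
    qed
  qed measurable
  then show ?thesis
    by simp
qed

lemma grad_approx_u0_tendsto_L2:
  "(\<lambda>n. \<integral>\<^sup>+ x. ennreal ((norm (grad_mu (approx_u0 n) x))\<^sup>2) \<partial>mu) \<longlonglongrightarrow> 0"
proof (rule tendsto_sandwich[where f="\<lambda>_. 0" and h="\<lambda>n. ennreal (80 / real (Suc n))"])
  show "\<forall>\<^sub>F n in sequentially. (\<integral>\<^sup>+ x. ennreal ((norm (grad_mu (approx_u0 n) x))\<^sup>2) \<partial>mu) \<le> ennreal (80 / real (Suc n))"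
  proof (intro always_eventually allI)
    fix n
    have "(\<integral>\<^sup>+ x. ennreal ((norm (grad_mu (approx_u0 n) x))\<^sup>2) \<partial>mu) \<le>
        (\<integral>\<^sup>+ x. ennreal (energy_density n (zaxis_dist_sq x)) \<partial>mu)"
    proof (rule nn_integral_mono_AE)
      show "AE x in mu. ennreal ((norm (grad_mu (approx_u0 n) x))\<^sup>2) \<le> ennreal (energy_density n (zaxis_dist_sq x))"
        using AE_mu_Sset
      proof eventually_elim
        case (elim x)
        then have "norm x < 2"
          using Sset_norm_le_1 by fastforce
        then show ?case
          using norm_grad_approx_u0 norm_grad_mu_le by (intro ennreal_leI) (metis norm_ge_zero power_mono)
      qed
    qed
    also have "\<dots> = (\<integral>\<^sup>+ q. indicator unit_disc q * ennreal (energy_density n ((q$1)\<^sup>2 + (q$2)\<^sup>2)) \<partial>lborel)"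
      by (simp add: nn_integral_mu nn_integral_muX nn_integral_muY zaxis_dist_sq_def energy_density_def)
    also have "\<dots> \<le> ennreal (80 / real (Suc n))"
      by (rule nn_integral_energy_density_le)
    finally show "(\<integral>\<^sup>+ x. ennreal ((norm (grad_mu (approx_u0 n) x))\<^sup>2) \<partial>mu) \<le> ennreal (80 / real (Suc n))" .
  qed
  have "(\<lambda>n. 80 / real (Suc n)) \<longlonglongrightarrow> 0"
    using LIMSEQ_Suc[OF lim_const_over_n[of "80::real"]] by simp
  then show "(\<lambda>n. ennreal (80 / real (Suc n))) \<longlonglongrightarrow> 0"
    using tendsto_ennrealI by fastforce
qed simp_all

lemma zero_gradient_in_H12:
  assumes "u \<in> borel_measurable borel" "\<And>x. \<bar>u x\<bar> \<le> B" "\<And>n. \<phi> n \<in> Cc_inf"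
    and "(\<lambda>n. \<integral>\<^sup>+ x. ennreal ((\<phi> n x - u x)\<^sup>2) \<partial>mu) \<longlonglongrightarrow> 0"
    and "(\<lambda>n. \<integral>\<^sup>+ x. ennreal ((norm (grad_mu (\<phi> n) x))\<^sup>2) \<partial>mu) \<longlonglongrightarrow> 0"
  shows "(u, \<lambda>_. 0) \<in> H12"
proof -
  have "\<bar>u x\<bar>\<^sup>2 \<le> B\<^sup>2" for x
    by (rule power_mono[OF assms(2)]) simp
  then have "(\<integral>\<^sup>+ x. ennreal ((u x)\<^sup>2) \<partial>mu) \<le> (\<integral>\<^sup>+ x. ennreal (B\<^sup>2) \<partial>mu)"
    by (intro nn_integral_mono ennreal_leI) simp
  also have "\<dots> < \<infinity>"
    using finite_measure.emeasure_finite[OF finite_measure_mu, of UNIV] by (simp add: ennreal_mult_less_top less_top)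
  finally show ?thesis
    using assms measurable_cong_sets[OF sets_mu refl] unfolding H12_def by auto
qed

lemma u0_in_H12: "(u0, \<lambda>_. 0) \<in> H12"
  by (rule zero_gradient_in_H12[OF u0_measurable _ approx_u0_in_Cc_inf
        approx_u0_tendsto_u0_L2 grad_approx_u0_tendsto_L2, where B=1])
    (simp add: u0_def)

lemma cutoff_in_H12: "(cutoff, \<lambda>_. 0) \<in> H12"
proof (rule zero_gradient_in_H12[OF cutoff_measurable _ cutoff_in_Cc_inf, where B=1])
  show "\<bar>cutoff x\<bar> \<le> 1" for x
    using cutoff_bounds[of x] by simp
  have "AE x in mu. ennreal ((norm (grad_mu cutoff x))\<^sup>2) = 0"
    using AE_mu_Sset
  proof eventually_elim
    case (elim x)
    then have "grad cutoff x = 0"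
      using Sset_norm_le_1[OF elim] by (intro grad_cutoff) simp
    then show ?case
      using norm_grad_mu_le[of cutoff x] by simp
  qed
  then have "(\<integral>\<^sup>+ x. ennreal ((norm (grad_mu cutoff x))\<^sup>2) \<partial>mu) = (\<integral>\<^sup>+ x. 0 \<partial>mu)"
    by (rule nn_integral_cong_AE)
  then show "(\<lambda>n. \<integral>\<^sup>+ x. ennreal ((norm (grad_mu cutoff x))\<^sup>2) \<partial>mu) \<longlonglongrightarrow> 0"
    by simp
qed simp

lemma emeasure_mu_segment_pos: "emeasure mu (Yset - {0}) > 0"
proof -
  have "{0..1} \<inter> embY -` (Yset - {0}) = {0<..1}"
    by (auto simp: Yset_def vec_eq_iff forall_3)
  then show ?thesis
    by (simp add: emeasure_mu emeasure_muY zero_less_iff_neq_zero)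
qed

lemma emeasure_mu_disc_pos: "emeasure mu (Xset - Yset) > 0"
proof -
  define B where "B = cbox (\<chi> i::2. (1/4::real)) (\<chi> i. 1/2)"
  have "B \<subseteq> unit_disc \<inter> embX -` (Xset - Yset)"
  proof
    fix q
    assume "q \<in> B"
    then have q: "1/4 \<le> q$1" "q$1 \<le> 1/2" "1/4 \<le> q$2" "q$2 \<le> 1/2"
      by (auto simp: B_def mem_box_cart)
    moreover have "(q$1)\<^sup>2 \<le> (1/2)\<^sup>2" "(q$2)\<^sup>2 \<le> (1/2)\<^sup>2"
      using q by (intro power_mono; linarith)+
    then have "(q$1)\<^sup>2 + (q$2)\<^sup>2 \<le> 1"
      unfolding power2_eq_square by linarith
    ultimately show "q \<in> unit_disc \<inter> embX -` (Xset - Yset)"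
      using q by (auto simp: unit_disc_def Xset_def Yset_def)
  qed
  then have "emeasure lborel B \<le> emeasure muX (Xset - Yset)"
    by (simp add: emeasure_muX emeasure_mono)
  moreover have "emeasure lborel B > 0"
    by (simp add: B_def emeasure_lborel_square)
  ultimately show ?thesis
    by (simp add: emeasure_mu add_pos_nonneg)
qed

lemma AE_imp_ex_in_pos_set:
  assumes "AE x in M. P x" "A \<in> sets M" "emeasure M A > 0"
  shows "\<exists>x\<in>A. P x"
proof (rule ccontr)
  assume "\<not> (\<exists>x\<in>A. P x)"
  with assms(1) have "AE x in M. x \<notin> A"
    by (auto elim: eventually_mono)
  then have "A \<in> null_sets M"
    using AE_iff_null_sets[OF assms(2)] by simp
  with assms(3) show False
    by (simp add: null_setsD1)
qed

lemma AE_mu_witnesses: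
  assumes "AE x in mu. P x"
  obtains x y where "x \<in> Yset" "P x" "y \<in> Xset" "y \<notin> Yset" "P y"
  using AE_imp_ex_in_pos_set[OF assms _ emeasure_mu_segment_pos]
    AE_imp_ex_in_pos_set[OF assms _ emeasure_mu_disc_pos]
  by auto

lemma u0_cutoff_independent:
  assumes "AE x in mu. a * u0 x + b * cutoff x = 0"
  shows "a = 0 \<and> b = 0"
proof -
  obtain x y where "x \<in> Yset" "a * u0 x + b * cutoff x = 0"
    "y \<in> Xset" "y \<notin> Yset" "a * u0 y + b * cutoff y = 0"
    using AE_mu_witnesses[OF assms] .
  moreover have "norm x \<le> 1" "norm y \<le> 1"
    using Sset_norm_le_1 \<open>x \<in> Yset\<close> \<open>y \<in> Xset\<close> by (auto simp: Sset_def)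
  then have "cutoff x = 1" "cutoff y = 1"
    by (simp_all add: cutoff_eq_1)
  ultimately show ?thesis
    by (simp add: u0_def)
qed

lemma integral_u0_deviation_pos: "(\<integral>x. (u0 x - c)\<^sup>2 \<partial>mu) > 0"
proof -
  have "integrable mu (\<lambda>x. (u0 x - c)\<^sup>2)"
    by (rule finite_measure.integrable_const_bound[OF finite_measure_mu, where B="(1 + \<bar>c\<bar>)\<^sup>2"])
      (auto simp: u0_def abs_le_square_iff[symmetric] intro!: AE_I2)
  moreover have "\<not> (AE x in mu. (u0 x - c)\<^sup>2 = 0)"
  proof
    assume "AE x in mu. (u0 x - c)\<^sup>2 = 0"
    then obtain x y where "x \<in> Yset" "(u0 x - c)\<^sup>2 = 0" "y \<notin> Yset" "(u0 y - c)\<^sup>2 = 0"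
      by (rule AE_mu_witnesses)
    then show False
      by (simp add: u0_def)
  qed
  ultimately have "(\<integral>x. (u0 x - c)\<^sup>2 \<partial>mu) \<noteq> 0"
    by (simp add: integral_nonneg_eq_0_iff_AE)
  moreover have "(\<integral>x. (u0 x - c)\<^sup>2 \<partial>mu) \<ge> 0"
    by simp
  ultimately show ?thesis
    by linarith
qed

theorem mainTheorem2:
  shows "(u0, (\<lambda>_. 0)) \<in> H12
    \<and> (\<exists>p1 \<in> ker_grad_mu. \<exists>p2 \<in> ker_grad_mu.
         \<forall>a b::real. ((AE x in mu. a * fst p1 x + b * fst p2 x = 0) \<and>
                      (AE x in mu. a *\<^sub>R snd p1 x + b *\<^sub>R snd p2 x = 0))
                     \<longrightarrow> a = 0 \<and> b = 0)
    \<and> (\<forall>C::real. \<exists>(u, g) \<in> H12.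
         (\<integral>x. (u x - (\<integral>y. u y \<partial>mu) / measure mu Sset)^2 \<partial>mu)
           > C * (\<integral>x. (norm (g x))^2 \<partial>mu))"
proof (intro conjI allI)
  show "(u0, (\<lambda>_. 0)) \<in> H12"
    by (rule u0_in_H12)
  have kernel: "(u0, \<lambda>_. 0) \<in> ker_grad_mu" "(cutoff, \<lambda>_. 0) \<in> ker_grad_mu"
    using u0_in_H12 cutoff_in_H12 by (simp_all add: ker_grad_mu_def)
  show "\<exists>p1 \<in> ker_grad_mu. \<exists>p2 \<in> ker_grad_mu.
         \<forall>a b::real. ((AE x in mu. a * fst p1 x + b * fst p2 x = 0) \<and>
                      (AE x in mu. a *\<^sub>R snd p1 x + b *\<^sub>R snd p2 x = 0))
                     \<longrightarrow> a = 0 \<and> b = 0"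
    by (intro bexI[OF _ kernel(1)] bexI[OF _ kernel(2)]) (auto dest: u0_cutoff_independent)
  fix C :: real
  show "\<exists>(u, g) \<in> H12. (\<integral>x. (u x - (\<integral>y. u y \<partial>mu) / measure mu Sset)^2 \<partial>mu)
           > C * (\<integral>x. (norm (g x))^2 \<partial>mu)"
    by (intro bexI[OF _ u0_in_H12]) (simp add: integral_u0_deviation_pos)
qed

end
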